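(* For every $n\ge1$, letting $\mathcal{A}^{(1)}_m$ denote the set of $1$-almost-increasing permutations in $S_m$, $$\mathcal{A}^{(1)}_{n+1}=\rho_{1,1}(\mathcal{A}^{(1)}_n)\cup\rho_{1,2}(\mathcal{A}^{(1)}_n)\cup\rho_{2,1}(\mathcal{A}^{(1)}_n)\cup\rho_{2,2}(\mathcal{A}^{(1)}_n).$$
   Context: A permutation $\pi\in S_m$ (one-line form) is $1$-almost-increasing if for every $i\in\{1,\dots,m\}$ there is at most one $j\le i$ with $\pi_j>i$; equivalently, $\pi$ avoids $4321,4312,3421,3412$. For $\pi\in S_n$ and $1\le i,j\le n+1$, $\rho_{i,j}(\pi)\in S_{n+1}$ is obtained by increasing by $1$ every entry of $\pi$ that is $\ge i$ and then inserting the value $i$ so that it occupies position $j$. *)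

theory Defs
  imports Main
begin

text \<open>A permutation in S_m in one-line form: list of length m whose entries are exactly 1..m.
  Position j (1-based) holds the entry xs ! (j - 1).\<close>
definition perm_S :: "nat \<Rightarrow> nat list \<Rightarrow> bool" where
  "perm_S m xs \<longleftrightarrow> length xs = m \<and> distinct xs \<and> set xs = {1..m}"

definition almost_inc1 :: "nat list \<Rightarrow> bool" where
  "almost_inc1 xs \<longleftrightarrow>
     (\<forall>i\<in>{1..length xs}. card {j\<in>{1..i}. xs ! (j - 1) > i} \<le> 1)"

definition A1 :: "nat \<Rightarrow> nat list set" where
  "A1 m = {xs. perm_S m xs \<and> almost_inc1 xs}"

definition rho :: "nat \<Rightarrow> nat \<Rightarrow> nat list \<Rightarrow> nat list" where
  "rho i j xs = (let ys = map (\<lambda>x. if x \<ge> i then x + 1 else x) xs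
                 in take (j - 1) ys @ [i] @ drop (j - 1) ys)"

end

theory Submission
  imports Defs
begin

(* Inserting a value v \<le> 2 at a position j \<le> 2 and shifting the entries \<ge> v up by one turns
  the count of entries among the first i that exceed i into the same count for the original
  permutation at i - 1, for every i \<ge> 2; at i = 1 the count is at most 1 anyway.  Hence such
  an insertion preserves and reflects 1-almost-increasingness.  Conversely, in a 1-almost-increasing
  permutation at most one of the first two entries exceeds 2, so one of them is 1 or 2, and
  deleting it (shifting larger entries down) undoes the corresponding insertion. *)

definition shift_up :: "nat \<Rightarrow> nat \<Rightarrow> nat" where
  "shift_up v x = (if v \<le> x then x + 1 else x)"

definition shift_down :: "nat \<Rightarrow> nat \<Rightarrow> nat" where
  "shift_down v x = (if v < x then x - 1 else x)"

lemma shift_down_shift_up [simp]: "shift_down v (shift_up v x) = x"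
  by (simp add: shift_up_def shift_down_def)

lemma shift_up_shift_down: "x \<noteq> v \<Longrightarrow> shift_up v (shift_down v x) = x"
  by (auto simp: shift_up_def shift_down_def)

lemma inj_shift_up: "inj (shift_up v)"
  by (metis shift_down_shift_up injI)

lemma shift_up_image:
  assumes "v \<in> {1..Suc n}"
  shows "shift_up v ` {1..n} = {1..Suc n} - {v}"
proof
  show "shift_up v ` {1..n} \<subseteq> {1..Suc n} - {v}"
    by (auto simp: shift_up_def)
  show "{1..Suc n} - {v} \<subseteq> shift_up v ` {1..n}"
  proof
    fix y assume y: "y \<in> {1..Suc n} - {v}"
    then have "shift_down v y \<in> {1..n}"
      using assms by (auto simp: shift_down_def)
    with y show "y \<in> shift_up v ` {1..n}"
      by (metis DiffE image_eqI insertCI shift_up_shift_down)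
  qed
qed

lemma rho_eq_insert_at:
  "rho v j xs = take (j - 1) (map (shift_up v) xs) @ v # drop (j - 1) (map (shift_up v) xs)"
  by (simp add: rho_def Let_def shift_up_def [abs_def])

lemma rho_split:
  obtains as bs where "map (shift_up v) xs = as @ bs" "rho v j xs = as @ v # bs" "length as \<le> j - 1"
proof
  show "map (shift_up v) xs = take (j - 1) (map (shift_up v) xs) @ drop (j - 1) (map (shift_up v) xs)"
    by simp
qed (simp_all add: rho_eq_insert_at)

lemma length_rho [simp]: "length (rho v j xs) = Suc (length xs)"
  by (simp add: rho_eq_insert_at)

lemma perm_S_rho:
  assumes "perm_S n xs" "v \<in> {1..Suc n}"
  shows "perm_S (Suc n) (rho v j xs)"
proof -
  define ys where "ys = map (shift_up v) xs"
  have ys: "length ys = n" "distinct ys" "set ys = {1..Suc n} - {v}"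
    using assms(1) shift_up_image [OF assms(2)]
    by (auto simp: ys_def perm_S_def distinct_map inj_on_subset [OF inj_shift_up])
  obtain as bs where split: "ys = as @ bs" "rho v j xs = as @ v # bs" "length as \<le> j - 1"
    unfolding ys_def by (rule rho_split)
  have "distinct (as @ v # bs)" "set (as @ v # bs) = {1..Suc n}"
    using ys(2,3) assms(2) by (auto simp: split(1))
  moreover have "length (as @ v # bs) = Suc n"
    using ys(1) by (simp add: split(1))
  ultimately show ?thesis
    by (simp add: perm_S_def split(2))
qed

lemma map_shift_up_shift_down: "v \<notin> set ys \<Longrightarrow> map (shift_up v) (map (shift_down v) ys) = ys"
  by (induction ys) (auto simp: shift_up_shift_down)

lemma perm_S_map_shift_down:
  assumes "distinct ys" "set ys = {1..Suc n} - {v}" "v \<in> {1..Suc n}"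
  shows "perm_S n (map (shift_down v) ys)"
proof -
  have "inj_on (shift_down v) (set ys)"
    using assms(2) by (intro inj_on_inverseI [where g = "shift_up v"]) (auto simp: shift_up_shift_down)
  moreover have "shift_down v ` set ys = shift_down v ` shift_up v ` {1..n}"
    using shift_up_image [OF assms(3)] assms(2) by simp
  then have "shift_down v ` set ys = {1..n}"
    by (simp add: image_image)
  moreover have "length ys = n"
    using assms(1,2,3) distinct_card [of ys] by simp
  ultimately show ?thesis
    using assms(1) by (simp add: perm_S_def distinct_map)
qed

lemma perm_S_Suc_obtain_rho:
  assumes "perm_S (Suc n) s" "1 \<le> j" "j \<le> Suc n"
  obtains xs where "perm_S n xs" "s = rho (s ! (j - 1)) j xs"
proof -
  define v where "v = s ! (j - 1)"
  define as where "as = take (j - 1) s"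
  define bs where "bs = drop j s"
  have s: "as @ v # bs = s"
    using assms id_take_nth_drop [of "j - 1" s] by (simp add: as_def bs_def v_def perm_S_def)
  have "distinct (as @ v # bs)" "set (as @ v # bs) = {1..Suc n}"
    using assms(1) unfolding s perm_S_def by simp_all
  then have ys: "distinct (v # as @ bs)" "set (v # as @ bs) = {1..Suc n}"
    by auto
  then have xs: "perm_S n (map (shift_down v) (as @ bs))"
    by (intro perm_S_map_shift_down) auto
  have "length as = j - 1"
    using assms by (simp add: as_def perm_S_def)
  moreover have "map (shift_up v) (map (shift_down v) (as @ bs)) = as @ bs"
    using ys(1) by (intro map_shift_up_shift_down) simp
  ultimately have "s = rho v j (map (shift_down v) (as @ bs))"
    unfolding rho_eq_insert_at using s by simp
  then show ?thesis
    using that [OF xs] by (simp add: v_def)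
qed

definition exceed_count :: "nat list \<Rightarrow> nat \<Rightarrow> nat" where
  "exceed_count xs i = length (filter (\<lambda>x. i < x) (take i xs))"

lemma card_exceeding_eq_exceed_count:
  assumes "i \<le> length xs"
  shows "card {j\<in>{1..i}. xs ! (j - 1) > i} = exceed_count xs i"
proof -
  have "{j\<in>{1..i}. xs ! (j - 1) > i} = Suc ` {k. k < i \<and> i < xs ! k}"
  proof (intro set_eqI iffI)
    fix j assume "j \<in> {j\<in>{1..i}. xs ! (j - 1) > i}"
    then show "j \<in> Suc ` {k. k < i \<and> i < xs ! k}"
      by (intro image_eqI [where x = "j - 1"]) auto
  qed auto
  then have "card {j\<in>{1..i}. xs ! (j - 1) > i} = card {k. k < i \<and> i < xs ! k}"
    by (simp add: card_image)
  also have "{k. k < i \<and> i < xs ! k} = {k. k < length (take i xs) \<and> i < take i xs ! k}"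
    using assms by auto
  also have "card \<dots> = exceed_count xs i"
    by (simp add: exceed_count_def length_filter_conv_card)
  finally show ?thesis .
qed

lemma almost_inc1_iff_exceed_count:
  "almost_inc1 xs \<longleftrightarrow> (\<forall>i\<in>{1..length xs}. exceed_count xs i \<le> 1)"
  unfolding almost_inc1_def using card_exceeding_eq_exceed_count by auto

lemma exceed_count_one_le: "exceed_count xs 1 \<le> 1"
  by (cases xs) (simp_all add: exceed_count_def)

lemma Suc_less_shift_up_iff: "v \<le> Suc k \<Longrightarrow> Suc k < shift_up v x \<longleftrightarrow> k < x"
  by (auto simp: shift_up_def)

lemma exceed_count_rho_Suc:
  assumes "v \<le> Suc k" "j \<le> Suc k"
  shows "exceed_count (rho v j xs) (Suc k) = exceed_count xs k"
proof -
  define ys where "ys = map (shift_up v) xs"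
  obtain as bs where split: "ys = as @ bs" "rho v j xs = as @ v # bs" "length as \<le> j - 1"
    unfolding ys_def by (rule rho_split)
  with assms(2) have "take (Suc k) (rho v j xs) = as @ v # take (k - length as) bs"
    "take k ys = as @ take (k - length as) bs"
    by (simp_all add: Suc_diff_le)
  then have "filter (\<lambda>x. Suc k < x) (take (Suc k) (rho v j xs))
      = filter (\<lambda>x. Suc k < x) (map (shift_up v) (take k xs))"
    using assms(1) by (simp add: ys_def take_map)
  then show ?thesis
    using assms(1) by (simp add: exceed_count_def filter_map comp_def Suc_less_shift_up_iff)
qed

lemma almost_inc1_rho_iff:
  assumes "v \<le> 2" "j \<le> 2"
  shows "almost_inc1 (rho v j xs) \<longleftrightarrow> almost_inc1 xs"
proof -
  have "{1..Suc (length xs)} = insert 1 (Suc ` {1..length xs})"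
    by (auto simp: image_iff)
  then have "almost_inc1 (rho v j xs) \<longleftrightarrow> (\<forall>k\<in>{1..length xs}. exceed_count (rho v j xs) (Suc k) \<le> 1)"
    using exceed_count_one_le [of "rho v j xs"]
    by (simp add: almost_inc1_iff_exceed_count del: image_Suc_atLeastAtMost)
  also have "\<dots> \<longleftrightarrow> almost_inc1 xs"
    using assms by (simp add: almost_inc1_iff_exceed_count exceed_count_rho_Suc)
  finally show ?thesis .
qed

lemma almost_inc1_obtain_small_entry:
  assumes "almost_inc1 s" "2 \<le> length s"
  obtains j where "j \<in> {1, 2}" "s ! (j - 1) \<le> 2"
proof -
  have "\<not> (s ! 0 > 2 \<and> s ! 1 > 2)"
  proof
    assume "s ! 0 > 2 \<and> s ! 1 > 2"
    then have "{j\<in>{1..2}. s ! (j - 1) > 2} = {1, 2}"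
      by (auto simp: numeral_2_eq_2 le_Suc_eq)
    moreover have "card {j\<in>{1..2}. s ! (j - 1) > 2} \<le> 1"
      using assms unfolding almost_inc1_def by auto
    ultimately show False
      by simp
  qed
  then consider "s ! 0 \<le> 2" | "s ! 1 \<le> 2"
    by linarith
  then show ?thesis
    using that [of 1] that [of 2] by cases simp_all
qed

lemma rho_in_A1_Suc:
  assumes "xs \<in> A1 n" "1 \<le> v" "v \<le> 2" "v \<le> Suc n" "j \<le> 2"
  shows "rho v j xs \<in> A1 (Suc n)"
  using assms perm_S_rho [of n xs v j] almost_inc1_rho_iff [of v j xs] by (simp add: A1_def)

lemma A1_Suc_obtain_rho:
  assumes "s \<in> A1 (Suc n)" "1 \<le> n"
  obtains v j xs where "v \<in> {1, 2}" "j \<in> {1, 2}" "xs \<in> A1 n" "s = rho v j xs"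
proof -
  have s: "perm_S (Suc n) s" "almost_inc1 s"
    using assms(1) by (simp_all add: A1_def)
  have "2 \<le> length s"
    using s(1) assms(2) by (simp add: perm_S_def)
  then obtain j where j: "j \<in> {1, 2}" "s ! (j - 1) \<le> 2"
    by (rule almost_inc1_obtain_small_entry [OF s(2)])
  have j_range: "1 \<le> j" "j \<le> Suc n"
    using j(1) assms(2) by auto
  define v where "v = s ! (j - 1)"
  obtain xs where xs: "perm_S n xs" "s = rho v j xs"
    by (rule perm_S_Suc_obtain_rho [OF s(1) j_range, folded v_def])
  have "j - 1 < length s"
    using s(1) j_range by (simp add: perm_S_def)
  then have "v \<in> set s"
    by (simp add: v_def)
  then have "v \<in> {1, 2}"
    using s(1) j(2) by (auto simp: v_def perm_S_def)
  moreover have "almost_inc1 xs"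
    using s(2) xs(2) almost_inc1_rho_iff [of v j xs] \<open>v \<in> {1, 2}\<close> j(1) by auto
  ultimately show ?thesis
    using that j(1) xs by (simp add: A1_def)
qed

theorem theorem7p4:
  fixes n :: nat
  assumes "n \<ge> 1"
  shows "A1 (n + 1) = rho 1 1 ` A1 n \<union> rho 1 2 ` A1 n \<union> rho 2 1 ` A1 n \<union> rho 2 2 ` A1 n"
proof (intro equalityI subsetI)
  fix s assume "s \<in> A1 (n + 1)"
  then have "s \<in> A1 (Suc n)"
    by simp
  then obtain v j xs where "v \<in> {1, 2}" "j \<in> {1, 2}" "xs \<in> A1 n" "s = rho v j xs"
    by (rule A1_Suc_obtain_rho [OF _ assms])
  then show "s \<in> rho 1 1 ` A1 n \<union> rho 1 2 ` A1 n \<union> rho 2 1 ` A1 n \<union> rho 2 2 ` A1 n"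
    by auto
next
  fix s assume "s \<in> rho 1 1 ` A1 n \<union> rho 1 2 ` A1 n \<union> rho 2 1 ` A1 n \<union> rho 2 2 ` A1 n"
  then show "s \<in> A1 (n + 1)"
    using assms by (elim UnE imageE) (simp_all add: rho_in_A1_Suc)
qed

end
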